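(* Let $A>0$, $R>0$, $\sigma\in\mathbb{R}$, and let $\lambda_1$ be the first eigenvalue of the problem $$u''+2Au'+\lambda u=0 \text{ on }[0,R],\qquad u'(0)=0,\qquad u'(R)=-\sigma u(R).$$ (a) For all $R>0$: $\lambda_1\geq2\sigma A-\sigma^2$ if $0\le\sigma\le A$, and $\lambda_1\ge A^2$ if $\sigma\ge A$. (b) If $\sigma<0$, then for all $R>0$, $\lambda_1\leq-\sigma^2+2A\sigma$. (c) If $\sigma>A$, there are positive constants $R_0,c_0$ depending only on $A$ and $\sigma$ such that for all $R\ge R_0$, $\lambda_1\geq A^2+\frac{\pi^2}{R^2}-\frac{c_0}{R^3}$.
   Context: The problem is the Sturm–Liouville eigenvalue problem for $-u''-2Au'$ on $L^2([0,R],e^{2Ax}dx)$ with the stated boundary conditions; its spectrum is discrete and $\lambda_1$ is the smallest eigenvalue. *)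

theory Defs
  imports "HOL-Analysis.Analysis"
begin

definition is_eigenvalue :: "real \<Rightarrow> real \<Rightarrow> real \<Rightarrow> real \<Rightarrow> bool" where
  "is_eigenvalue A R \<sigma> lam \<longleftrightarrow>
     (\<exists>u u' :: real \<Rightarrow> real.
        (\<forall>x\<in>{0..R}. (u has_real_derivative u' x) (at x within {0..R})) \<and>
        (\<forall>x\<in>{0..R}. (u' has_real_derivative (- 2 * A * u' x - lam * u x)) (at x within {0..R})) \<and>
        u' 0 = 0 \<and> u' R = - \<sigma> * u R \<and>
        (\<exists>x\<in>{0..R}. u x \<noteq> 0))"

definition first_eigenvalue :: "real \<Rightarrow> real \<Rightarrow> real \<Rightarrow> real" where
  "first_eigenvalue A R \<sigma> = Inf {lam. is_eigenvalue A R \<sigma> lam}"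

end

theory Submission
  imports Defs
begin

text \<open>Every eigenfunction is a multiple of the solution with initial data u(0) = 1, u'(0) = 0,
  which is explicit: writing the eigenvalue as A^2 - k^2, A^2 or A^2 + k^2 it is
  e^(-Ax) times a combination of cosh/sinh (kx), of 1 and x, or of cos/sin (kx). The boundary
  condition at R thus becomes a transcendental equation in k. Below A^2 its left-hand side equals
  (k + A)(k - (A - \<sigma>)) sinh(kR) + \<sigma>k e^(-kR), whose sign gives (a) and, via the intermediate
  value theorem on [A - \<sigma>, \<infinity>), also (b). Above A^2 the equation reads
  (A(\<sigma> - A) - k^2) sin(kR) = -\<sigma>k cos(kR); for \<sigma> > A and large R it forces kR to lie within
  O(1/R) of \<pi>, which is (c).\<close>

definition damped_ode_solution ::
    "real \<Rightarrow> real \<Rightarrow> real \<Rightarrow> (real \<Rightarrow> real) \<Rightarrow> (real \<Rightarrow> real) \<Rightarrow> bool" where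
  "damped_ode_solution A lam R u u' \<longleftrightarrow>
     (\<forall>x\<in>{0..R}. (u has_real_derivative u' x) (at x within {0..R})) \<and>
     (\<forall>x\<in>{0..R}. (u' has_real_derivative (- 2 * A * u' x - lam * u x)) (at x within {0..R}))"

lemma is_eigenvalue_iff_solution:
  "is_eigenvalue A R \<sigma> lam \<longleftrightarrow>
     (\<exists>u u'. damped_ode_solution A lam R u u' \<and> u' 0 = 0 \<and> u' R = - \<sigma> * u R \<and>
        (\<exists>x\<in>{0..R}. u x \<noteq> 0))"
  unfolding is_eigenvalue_def damped_ode_solution_def by blast

lemma damped_ode_solution_diff_scaled:
  assumes "damped_ode_solution A lam R u u'" and "damped_ode_solution A lam R v v'"
  shows "damped_ode_solution A lam R (\<lambda>x. u x - c * v x) (\<lambda>x. u' x - c * v' x)"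
  unfolding damped_ode_solution_def
proof (intro conjI ballI)
  fix x assume x: "x \<in> {0..R}"
  show "((\<lambda>x. u x - c * v x) has_real_derivative u' x - c * v' x) (at x within {0..R})"
    using assms x unfolding damped_ode_solution_def by (auto intro!: derivative_eq_intros)
  have "((\<lambda>x. u' x - c * v' x) has_real_derivative
          (- 2 * A * u' x - lam * u x) - c * (- 2 * A * v' x - lam * v x)) (at x within {0..R})"
    using assms x unfolding damped_ode_solution_def by (auto intro!: derivative_eq_intros)
  then show "((\<lambda>x. u' x - c * v' x) has_real_derivative
          - 2 * A * (u' x - c * v' x) - lam * (u x - c * v x)) (at x within {0..R})"
    by (simp add: algebra_simps)
qed

lemma damped_energy_growth:
  fixes a b :: real
  shows "2 * a * b + 2 * b * (- 2 * A * b - lam * a) \<le> (\<bar>1 - lam\<bar> + 4 * \<bar>A\<bar>) * (a^2 + b^2)"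
proof -
  have ab: "2 * \<bar>a * b\<bar> \<le> a^2 + b^2"
    using sum_squares_bound[of "\<bar>a\<bar>" "\<bar>b\<bar>"] by (simp add: abs_mult)
  have "2 * a * b * (1 - lam) \<le> \<bar>2 * a * b * (1 - lam)\<bar>"
    by (rule abs_ge_self)
  also have "\<dots> = \<bar>1 - lam\<bar> * (2 * \<bar>a * b\<bar>)"
    by (simp add: abs_mult)
  also have "\<dots> \<le> \<bar>1 - lam\<bar> * (a^2 + b^2)"
    using ab by (intro mult_left_mono) auto
  finally have mixed: "2 * a * b * (1 - lam) \<le> \<bar>1 - lam\<bar> * (a^2 + b^2)" .
  have "- 4 * A * b^2 \<le> 4 * \<bar>A\<bar> * b^2"
    by (intro mult_right_mono) auto
  also have "\<dots> \<le> 4 * \<bar>A\<bar> * (a^2 + b^2)"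
    by (intro mult_left_mono) auto
  finally have "- 4 * A * b^2 \<le> 4 * \<bar>A\<bar> * (a^2 + b^2)" .
  with mixed show ?thesis
    by (simp add: algebra_simps power2_eq_square)
qed

lemma damped_ode_solution_zero:
  assumes sol: "damped_ode_solution A lam R z z'" and "z 0 = 0" and "z' 0 = 0"
    and x: "x \<in> {0..R}"
  shows "z x = 0 \<and> z' x = 0"
proof -
  define C where "C = \<bar>1 - lam\<bar> + 4 * \<bar>A\<bar>"
  define F where "F = (\<lambda>t. (z t ^ 2 + z' t ^ 2) * exp (- C * t))"
  define D where "D = (\<lambda>t. (2 * z t * z' t + 2 * z' t * (- 2 * A * z' t - lam * z t)
      - C * (z t ^ 2 + z' t ^ 2)) * exp (- C * t))"
  have F_deriv: "(F has_real_derivative D t) (at t within {0..x})" if "t \<in> {0..x}" for t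
  proof -
    have t: "t \<in> {0..R}" and sub: "{0..x} \<subseteq> {0..R}" using that x by auto
    have "(z has_real_derivative z' t) (at t within {0..x})"
      and "(z' has_real_derivative (- 2 * A * z' t - lam * z t)) (at t within {0..x})"
      using sol t DERIV_subset[OF _ sub] unfolding damped_ode_solution_def by blast+
    then show ?thesis
      unfolding F_def D_def by (auto intro!: derivative_eq_intros simp: algebra_simps)
  qed
  have D_nonpos: "D t \<le> 0" for t
    using damped_energy_growth[of "z t" "z' t" A lam]
    unfolding D_def C_def by (simp add: mult_nonpos_nonneg)
  obtain t where "t \<in> {0..x}" "F x - F 0 = D t * (x - 0)"
    using mvt_very_simple[of 0 x F "\<lambda>t h. D t * h"] x F_deriv
    unfolding has_field_derivative_def by auto
  then have "F x \<le> 0"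
    using D_nonpos[of t] x assms(2,3) unfolding F_def by (simp add: mult_nonpos_nonneg)
  then have "z x ^ 2 + z' x ^ 2 \<le> 0"
    unfolding F_def by (simp add: mult_le_0_iff)
  then show ?thesis
    by (simp only: sum_power2_le_zero_iff)
qed

lemma is_eigenvalue_iff_canonical:
  assumes "0 \<le> R" and P: "damped_ode_solution A lam R P P'" and "P 0 = 1" and "P' 0 = 0"
  shows "is_eigenvalue A R \<sigma> lam \<longleftrightarrow> P' R = - \<sigma> * P R"
proof
  assume "is_eigenvalue A R \<sigma> lam"
  then obtain u u' where u: "damped_ode_solution A lam R u u'" and "u' 0 = 0"
    and bc: "u' R = - \<sigma> * u R" and nonzero: "\<exists>x\<in>{0..R}. u x \<noteq> 0"
    unfolding is_eigenvalue_iff_solution by blast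
  have multiple: "u x = u 0 * P x \<and> u' x = u 0 * P' x" if "x \<in> {0..R}" for x
    using damped_ode_solution_zero[OF damped_ode_solution_diff_scaled[OF u P, of "u 0"] _ _ that]
      assms \<open>u' 0 = 0\<close> by simp
  have "u 0 \<noteq> 0"
    using nonzero multiple by force
  have "u 0 * P' R = u' R"
    using multiple[of R] \<open>0 \<le> R\<close> by simp
  also have "\<dots> = - \<sigma> * u R"
    by (rule bc)
  also have "\<dots> = u 0 * (- \<sigma> * P R)"
    using multiple[of R] \<open>0 \<le> R\<close> by simp
  finally have "u 0 * P' R = u 0 * (- \<sigma> * P R)" .
  with \<open>u 0 \<noteq> 0\<close> show "P' R = - \<sigma> * P R"
    using mult_left_cancel by blast
next
  assume "P' R = - \<sigma> * P R"
  then show "is_eigenvalue A R \<sigma> lam"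
    unfolding is_eigenvalue_iff_solution using assms by force
qed

definition hyp_sol :: "real \<Rightarrow> real \<Rightarrow> real \<Rightarrow> real" where
  "hyp_sol A k x = exp (- A * x) * (cosh (k * x) + A / k * sinh (k * x))"

definition hyp_sol' :: "real \<Rightarrow> real \<Rightarrow> real \<Rightarrow> real" where
  "hyp_sol' A k x = exp (- A * x) * ((k^2 - A^2) / k) * sinh (k * x)"

definition crit_sol :: "real \<Rightarrow> real \<Rightarrow> real" where
  "crit_sol A x = exp (- A * x) * (1 + A * x)"

definition crit_sol' :: "real \<Rightarrow> real \<Rightarrow> real" where
  "crit_sol' A x = - (A^2 * x * exp (- A * x))"

definition trig_sol :: "real \<Rightarrow> real \<Rightarrow> real \<Rightarrow> real" where
  "trig_sol A k x = exp (- A * x) * (cos (k * x) + A / k * sin (k * x))"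

definition trig_sol' :: "real \<Rightarrow> real \<Rightarrow> real \<Rightarrow> real" where
  "trig_sol' A k x = - exp (- A * x) * ((k^2 + A^2) / k) * sin (k * x)"

lemma hyp_sol_has_derivative:
  "k \<noteq> 0 \<Longrightarrow> (hyp_sol A k has_real_derivative hyp_sol' A k x) (at x within S)"
  unfolding hyp_sol_def hyp_sol'_def
  by (rule derivative_eq_intros refl | simp)+ (simp add: field_simps power2_eq_square)

lemma hyp_sol'_has_derivative:
  "k \<noteq> 0 \<Longrightarrow> (hyp_sol' A k has_real_derivative
     (- 2 * A * hyp_sol' A k x - (A^2 - k^2) * hyp_sol A k x)) (at x within S)"
  unfolding hyp_sol_def hyp_sol'_def
  by (rule derivative_eq_intros refl | simp)+ (simp add: field_simps power2_eq_square)

lemma crit_sol_has_derivative: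
  "(crit_sol A has_real_derivative crit_sol' A x) (at x within S)"
  unfolding crit_sol_def crit_sol'_def
  by (rule derivative_eq_intros refl | simp)+ (simp add: field_simps power2_eq_square)

lemma crit_sol'_has_derivative:
  "(crit_sol' A has_real_derivative
     (- 2 * A * crit_sol' A x - A^2 * crit_sol A x)) (at x within S)"
  unfolding crit_sol_def crit_sol'_def
  by (rule derivative_eq_intros refl | simp)+ (simp add: field_simps power2_eq_square)

lemma trig_sol_has_derivative:
  "k \<noteq> 0 \<Longrightarrow> (trig_sol A k has_real_derivative trig_sol' A k x) (at x within S)"
  unfolding trig_sol_def trig_sol'_def
  by (rule derivative_eq_intros refl | simp)+ (simp add: field_simps power2_eq_square)

lemma trig_sol'_has_derivative:
  "k \<noteq> 0 \<Longrightarrow> (trig_sol' A k has_real_derivative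
     (- 2 * A * trig_sol' A k x - (A^2 + k^2) * trig_sol A k x)) (at x within S)"
  unfolding trig_sol_def trig_sol'_def
  by (rule derivative_eq_intros refl | simp)+ (simp add: field_simps power2_eq_square)

lemma damped_ode_solution_hyp:
  assumes "k \<noteq> 0"
  shows "damped_ode_solution A (A^2 - k^2) R (hyp_sol A k) (hyp_sol' A k)"
  unfolding damped_ode_solution_def
  using hyp_sol_has_derivative[OF assms] hyp_sol'_has_derivative[OF assms] by blast

lemma damped_ode_solution_crit:
  "damped_ode_solution A (A^2) R (crit_sol A) (crit_sol' A)"
  unfolding damped_ode_solution_def
  using crit_sol_has_derivative crit_sol'_has_derivative by blast

lemma damped_ode_solution_trig:
  assumes "k \<noteq> 0"
  shows "damped_ode_solution A (A^2 + k^2) R (trig_sol A k) (trig_sol' A k)"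
  unfolding damped_ode_solution_def
  using trig_sol_has_derivative[OF assms] trig_sol'_has_derivative[OF assms] by blast

definition hyp_char :: "real \<Rightarrow> real \<Rightarrow> real \<Rightarrow> real \<Rightarrow> real" where
  "hyp_char A \<sigma> R k = \<sigma> * k * cosh (k * R) + (k^2 - A^2 + \<sigma> * A) * sinh (k * R)"

definition trig_char :: "real \<Rightarrow> real \<Rightarrow> real \<Rightarrow> real \<Rightarrow> real" where
  "trig_char A \<sigma> R k = \<sigma> * k * cos (k * R) - (k^2 + A^2 - \<sigma> * A) * sin (k * R)"

lemma is_eigenvalue_hyp_iff:
  assumes "0 \<le> R" and "k \<noteq> 0"
  shows "is_eigenvalue A R \<sigma> (A^2 - k^2) \<longleftrightarrow> hyp_char A \<sigma> R k = 0"
proof -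
  have "is_eigenvalue A R \<sigma> (A^2 - k^2) \<longleftrightarrow> hyp_sol' A k R + \<sigma> * hyp_sol A k R = 0"
    using is_eigenvalue_iff_canonical[OF \<open>0 \<le> R\<close> damped_ode_solution_hyp[OF \<open>k \<noteq> 0\<close>]]
    by (auto simp: hyp_sol_def hyp_sol'_def)
  also have "hyp_sol' A k R + \<sigma> * hyp_sol A k R = exp (- A * R) / k * hyp_char A \<sigma> R k"
    using \<open>k \<noteq> 0\<close> by (simp add: hyp_sol_def hyp_sol'_def hyp_char_def field_simps power2_eq_square)
  finally show ?thesis
    using \<open>k \<noteq> 0\<close> by simp
qed

lemma is_eigenvalue_crit_iff:
  assumes "0 \<le> R"
  shows "is_eigenvalue A R \<sigma> (A^2) \<longleftrightarrow> \<sigma> + (\<sigma> - A) * A * R = 0"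
proof -
  have "is_eigenvalue A R \<sigma> (A^2) \<longleftrightarrow> crit_sol' A R + \<sigma> * crit_sol A R = 0"
    using is_eigenvalue_iff_canonical[OF \<open>0 \<le> R\<close> damped_ode_solution_crit]
    by (auto simp: crit_sol_def crit_sol'_def)
  also have "crit_sol' A R + \<sigma> * crit_sol A R = exp (- A * R) * (\<sigma> + (\<sigma> - A) * A * R)"
    by (simp add: crit_sol_def crit_sol'_def field_simps power2_eq_square)
  finally show ?thesis
    by simp
qed

lemma is_eigenvalue_trig_iff:
  assumes "0 \<le> R" and "k \<noteq> 0"
  shows "is_eigenvalue A R \<sigma> (A^2 + k^2) \<longleftrightarrow> trig_char A \<sigma> R k = 0"
proof -
  have "is_eigenvalue A R \<sigma> (A^2 + k^2) \<longleftrightarrow> trig_sol' A k R + \<sigma> * trig_sol A k R = 0"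
    using is_eigenvalue_iff_canonical[OF \<open>0 \<le> R\<close> damped_ode_solution_trig[OF \<open>k \<noteq> 0\<close>]]
    by (auto simp: trig_sol_def trig_sol'_def)
  also have "trig_sol' A k R + \<sigma> * trig_sol A k R = exp (- A * R) / k * trig_char A \<sigma> R k"
    using \<open>k \<noteq> 0\<close> by (simp add: trig_sol_def trig_sol'_def trig_char_def field_simps power2_eq_square)
  finally show ?thesis
    using \<open>k \<noteq> 0\<close> by simp
qed

lemma hyp_char_eq:
  "hyp_char A \<sigma> R k = (k + A) * (k - (A - \<sigma>)) * sinh (k * R) + \<sigma> * k * exp (- (k * R))"
  unfolding hyp_char_def cosh_minus_sinh[symmetric]
  by (simp add: algebra_simps power2_eq_square)

lemma hyp_char_pos:
  assumes "0 \<le> \<sigma>" and "0 < A" and "0 < R" and "0 < k" and "A - \<sigma> < k"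
  shows "0 < hyp_char A \<sigma> R k"
proof -
  have "0 < (k + A) * (k - (A - \<sigma>)) * sinh (k * R)"
    using assms by simp
  moreover have "0 \<le> \<sigma> * k * exp (- (k * R))"
    using assms by simp
  ultimately show ?thesis
    unfolding hyp_char_eq by linarith
qed

lemma hyp_char_pos_of_large:
  assumes "\<sigma> \<le> 0" and "0 < A" and "0 < R" and k: "A - \<sigma> - \<sigma> / (A * R) < k"
  shows "0 < hyp_char A \<sigma> R k"
proof -
  have gap: "- \<sigma> < A * R * (k - (A - \<sigma>))"
    using k \<open>0 < A\<close> \<open>0 < R\<close> by (simp add: field_simps)
  then have "0 < A * R * (k - (A - \<sigma>))"
    using \<open>\<sigma> \<le> 0\<close> by linarith
  then have "0 < k - (A - \<sigma>)"
    by (rule zero_less_mult_pos) (use assms in simp)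
  then have "0 < k"
    using assms by linarith
  have sinh_ge: "k * R \<le> sinh (k * R)"
    using real_le_x_sinh[of "k * R"] \<open>0 < k\<close> \<open>0 < R\<close> by (simp add: sinh_field_def exp_minus)
  have "A * (k - (A - \<sigma>)) * (k * R) \<le> (k + A) * (k - (A - \<sigma>)) * sinh (k * R)"
    using sinh_ge \<open>0 < k\<close> \<open>0 < R\<close> \<open>0 < A\<close> \<open>0 < k - (A - \<sigma>)\<close>
    by (intro mult_mono) auto
  moreover have "\<sigma> * k \<le> \<sigma> * k * exp (- (k * R))"
    using mult_left_mono_neg[of "exp (- (k * R))" 1 "\<sigma> * k"] \<open>0 < k\<close> \<open>0 < R\<close> assms(1)
    by (simp add: mult_nonpos_nonneg)
  ultimately have "k * (A * R * (k - (A - \<sigma>)) + \<sigma>) \<le> hyp_char A \<sigma> R k"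
    unfolding hyp_char_eq by (simp add: algebra_simps)
  moreover have "0 < k * (A * R * (k - (A - \<sigma>)) + \<sigma>)"
    using gap \<open>0 < k\<close> by simp
  ultimately show ?thesis
    by linarith
qed

lemma hyp_char_at_A_minus_sigma:
  "hyp_char A \<sigma> R (A - \<sigma>) = \<sigma> * (A - \<sigma>) * exp (- ((A - \<sigma>) * R))"
  by (simp add: hyp_char_eq)

lemma is_eigenvalue_below_A2E:
  assumes "is_eigenvalue A R \<sigma> lam" and "lam < A^2" and "0 \<le> R"
  obtains k where "0 < k" and "lam = A^2 - k^2" and "hyp_char A \<sigma> R k = 0"
proof
  define k where "k = sqrt (A^2 - lam)"
  show "0 < k" and lam: "lam = A^2 - k^2"
    unfolding k_def using \<open>lam < A^2\<close> by simp_all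
  show "hyp_char A \<sigma> R k = 0"
    using assms(1) is_eigenvalue_hyp_iff[OF \<open>0 \<le> R\<close>, of k] \<open>0 < k\<close> lam by simp
qed

lemma is_eigenvalue_above_A2E:
  assumes "is_eigenvalue A R \<sigma> lam" and "A^2 < lam" and "0 \<le> R"
  obtains k where "0 < k" and "lam = A^2 + k^2" and "trig_char A \<sigma> R k = 0"
proof
  define k where "k = sqrt (lam - A^2)"
  show "0 < k" and lam: "lam = A^2 + k^2"
    unfolding k_def using \<open>A^2 < lam\<close> by simp_all
  show "trig_char A \<sigma> R k = 0"
    using assms(1) is_eigenvalue_trig_iff[OF \<open>0 \<le> R\<close>, of k] \<open>0 < k\<close> lam by simp
qed

lemma eigenvalue_ge_of_nonneg_sigma:
  assumes "0 < A" and "0 < R" and "0 \<le> \<sigma>" and "\<sigma> \<le> A" and ev: "is_eigenvalue A R \<sigma> lam"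
  shows "2 * \<sigma> * A - \<sigma>^2 \<le> lam"
proof -
  have bound: "2 * \<sigma> * A - \<sigma>^2 = A^2 - (A - \<sigma>)^2"
    by (simp add: power2_diff algebra_simps)
  show ?thesis
  proof (cases "lam < A^2")
    case True
    then obtain k where "0 < k" and lam: "lam = A^2 - k^2" and "hyp_char A \<sigma> R k = 0"
      using is_eigenvalue_below_A2E[OF ev] \<open>0 < R\<close> by auto
    then have "k \<le> A - \<sigma>"
      using hyp_char_pos[of \<sigma> A R k] assms by force
    then have "k^2 \<le> (A - \<sigma>)^2"
      using \<open>0 < k\<close> by (intro power_mono) auto
    then show ?thesis
      using bound lam by linarith
  next
    case False
    then show ?thesis
      using bound zero_le_power2[of "A - \<sigma>"] by linarith
  qed
qed

lemma eigenvalue_gt_A2: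
  assumes "0 < A" and "0 < R" and "A \<le> \<sigma>" and ev: "is_eigenvalue A R \<sigma> lam"
  shows "A^2 < lam"
proof -
  have "lam \<noteq> A^2"
  proof
    assume "lam = A^2"
    then have "\<sigma> + (\<sigma> - A) * A * R = 0"
      using ev is_eigenvalue_crit_iff \<open>0 < R\<close> by auto
    moreover have "0 \<le> (\<sigma> - A) * A * R"
      using assms by simp
    ultimately show False
      using assms by linarith
  qed
  moreover have "\<not> lam < A^2"
  proof
    assume "lam < A^2"
    then obtain k where "0 < k" and "hyp_char A \<sigma> R k = 0"
      using is_eigenvalue_below_A2E[OF ev] \<open>0 < R\<close> by auto
    then show False
      using hyp_char_pos[of \<sigma> A R k] assms by force
  qed
  ultimately show ?thesis
    by simp
qed

lemma eigenvalues_bdd_below_of_nonpos_sigma: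
  assumes "\<sigma> \<le> 0" and "0 < A" and "0 < R"
  shows "bdd_below {lam. is_eigenvalue A R \<sigma> lam}"
proof
  define K where "K = A - \<sigma> - \<sigma> / (A * R)"
  fix lam assume "lam \<in> {lam. is_eigenvalue A R \<sigma> lam}"
  then have ev: "is_eigenvalue A R \<sigma> lam"
    by simp
  show "A^2 - K^2 \<le> lam"
  proof (cases "lam < A^2")
    case True
    then obtain k where "0 < k" and lam: "lam = A^2 - k^2" and "hyp_char A \<sigma> R k = 0"
      using is_eigenvalue_below_A2E[OF ev] \<open>0 < R\<close> by auto
    then have "k \<le> K"
      using hyp_char_pos_of_large[OF assms, of k] unfolding K_def by force
    then have "k^2 \<le> K^2"
      using \<open>0 < k\<close> by (intro power_mono) auto
    then show ?thesis
      using lam by linarith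
  qed (use zero_le_power2[of K] in linarith)
qed

lemma eigenvalue_le_of_neg_sigma:
  assumes "\<sigma> < 0" and "0 < A" and "0 < R"
  obtains lam where "is_eigenvalue A R \<sigma> lam" and "lam \<le> 2 * A * \<sigma> - \<sigma>^2"
proof -
  define q where "q = \<sigma> / (A * R)"
  define K where "K = A - \<sigma> - 2 * q"
  have "q < 0"
    unfolding q_def using assms by (simp add: divide_neg_pos)
  then have "A - \<sigma> \<le> K"
    unfolding K_def by simp
  moreover have "hyp_char A \<sigma> R (A - \<sigma>) \<le> 0"
    unfolding hyp_char_at_A_minus_sigma using assms by (simp add: mult_nonpos_nonneg)
  moreover have "0 \<le> hyp_char A \<sigma> R K"
    using hyp_char_pos_of_large[of \<sigma> A R K] assms \<open>q < 0\<close> unfolding K_def q_def by simp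
  moreover have "continuous_on {A - \<sigma>..K} (hyp_char A \<sigma> R)"
    unfolding hyp_char_def by (intro continuous_intros)
  ultimately obtain k where k: "A - \<sigma> \<le> k" and "hyp_char A \<sigma> R k = 0"
    using IVT'[of "hyp_char A \<sigma> R" "A - \<sigma>" 0 K] by auto
  moreover have "0 < k"
    using k assms by linarith
  ultimately have "is_eigenvalue A R \<sigma> (A^2 - k^2)"
    using is_eigenvalue_hyp_iff \<open>0 < R\<close> by simp
  moreover have "(A - \<sigma>)^2 \<le> k^2"
    using k assms by (intro power_mono) auto
  then have "A^2 - k^2 \<le> 2 * A * \<sigma> - \<sigma>^2"
    by (simp add: power2_diff algebra_simps)
  ultimately show ?thesis
    using that by blast
qed

lemma is_eigenvalue_exists:
  assumes "0 < R"
  shows "\<exists>lam. is_eigenvalue A R \<sigma> lam"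
proof -
  define a b where "a = pi / R" and "b = 2 * pi / R"
  have "a \<le> b" and "0 < a"
    unfolding a_def b_def using assms by (auto simp: divide_right_mono)
  have "trig_char A \<sigma> R a = - \<sigma> * a" and "trig_char A \<sigma> R b = \<sigma> * b"
    unfolding trig_char_def a_def b_def using assms by simp_all
  moreover have "continuous_on {a..b} (trig_char A \<sigma> R)"
    unfolding trig_char_def by (intro continuous_intros)
  ultimately obtain k where "a \<le> k" and "trig_char A \<sigma> R k = 0"
    using IVT'[of "trig_char A \<sigma> R" a 0 b] IVT2'[of "trig_char A \<sigma> R" b 0 a] \<open>a \<le> b\<close> \<open>0 < a\<close>
    by (cases "0 \<le> \<sigma>") (auto simp: mult_nonpos_nonneg mult_neg_pos less_imp_le)
  then have "is_eigenvalue A R \<sigma> (A^2 + k^2)"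
    using is_eigenvalue_trig_iff[of R k] \<open>0 < a\<close> assms by simp
  then show ?thesis ..
qed

lemma first_eigenvalue_ge:
  assumes "0 < R" and "\<And>lam. is_eigenvalue A R \<sigma> lam \<Longrightarrow> b \<le> lam"
  shows "b \<le> first_eigenvalue A R \<sigma>"
  unfolding first_eigenvalue_def
  by (rule cInf_greatest) (use is_eigenvalue_exists[OF \<open>0 < R\<close>] assms(2) in auto)

lemma mult_cos_le_sin:
  fixes \<theta> :: real
  assumes "0 \<le> \<theta>" and "\<theta> \<le> pi"
  shows "\<theta> * cos \<theta> \<le> sin \<theta>"
proof (cases "\<theta> < pi / 2")
  case True
  have "0 < cos \<theta>"
    using True assms by (intro cos_gt_zero_pi) auto
  moreover have "\<theta> \<le> tan \<theta>"
    using abs_tan_ge[of \<theta>] True assms \<open>0 < cos \<theta>\<close>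
    by (simp add: tan_def sin_ge_zero)
  ultimately show ?thesis
    by (simp add: tan_def le_divide_eq)
next
  case False
  have "cos \<theta> = - cos (pi - \<theta>)"
    by simp
  moreover have "0 \<le> cos (pi - \<theta>)"
    using False assms by (intro cos_ge_zero) auto
  ultimately have "\<theta> * cos \<theta> \<le> 0"
    using assms by (simp add: mult_nonneg_nonpos)
  then show ?thesis
    using sin_ge_zero[OF assms] by linarith
qed

lemma trig_char_root_gap:
  assumes "0 < \<sigma>" and "0 < k" and "0 < R" and "k * R < pi" and "k^2 < A * (\<sigma> - A)"
    and root: "trig_char A \<sigma> R k = 0"
  shows "(A * (\<sigma> - A) - k^2) * (pi - k * R) \<le> \<sigma> * k"
proof -
  define \<theta> where "\<theta> = pi - k * R"
  define m where "m = A * (\<sigma> - A) - k^2"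
  have "0 < \<theta>" "\<theta> < pi" and "0 < m"
    unfolding \<theta>_def m_def using assms by (auto simp: mult_pos_pos)
  have eq: "m * sin \<theta> = \<sigma> * k * cos \<theta>"
    using root unfolding \<theta>_def m_def trig_char_def by (simp add: algebra_simps power2_eq_square)
  have "0 < m * sin \<theta>"
    using \<open>0 < m\<close> \<open>0 < \<theta>\<close> \<open>\<theta> < pi\<close> by (simp add: sin_gt_zero)
  then have "0 < (\<sigma> * k) * cos \<theta>"
    using eq by simp
  then have "0 < cos \<theta>"
    using zero_less_mult_pos[of "\<sigma> * k" "cos \<theta>"] assms by simp
  have "m * \<theta> * cos \<theta> \<le> m * sin \<theta>"
    using mult_cos_le_sin[of \<theta>] \<open>0 < \<theta>\<close> \<open>\<theta> < pi\<close> \<open>0 < m\<close>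
    by (simp add: mult.assoc mult_left_mono)
  then have "(m * \<theta>) * cos \<theta> \<le> (\<sigma> * k) * cos \<theta>"
    using eq by simp
  then have "m * \<theta> \<le> \<sigma> * k"
    using \<open>0 < cos \<theta>\<close> by (rule mult_right_le_imp_le)
  then show ?thesis
    unfolding \<theta>_def m_def .
qed

lemma power2_ge_of_gt_diff:
  fixes k a b :: real
  assumes "0 < k" and "a - b < k" and "0 \<le> a" and "0 \<le> b"
  shows "a^2 - 2 * a * b \<le> k^2"
proof (cases "a - b \<le> 0")
  case True
  then have "a * a \<le> a * b"
    using assms by (intro mult_left_mono) auto
  moreover have "0 \<le> a * b"
    using assms by simp
  ultimately show ?thesis
    using zero_le_square[of k] by (unfold power2_eq_square mult.assoc) linarith
next
  case False
  then have "(a - b)^2 \<le> k^2"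
    using assms by (intro power_mono) auto
  moreover have "(a - b)^2 = a^2 + b^2 - 2 * a * b"
    by (rule power2_diff)
  ultimately show ?thesis
    using zero_le_power2[of b] by linarith
qed

lemma trig_char_root_near_pi_div_R:
  assumes "0 < A" and "A < \<sigma>" and "0 < R" and large: "2 * pi^2 \<le> A * (\<sigma> - A) * R^2"
    and "0 < k" and "k < pi / R" and root: "trig_char A \<sigma> R k = 0"
  shows "pi / R - 2 * \<sigma> * pi / (A * (\<sigma> - A) * R^2) < k"
proof -
  define m where "m = A * (\<sigma> - A)"
  have "0 < m"
    unfolding m_def using assms by simp
  have "k * R < pi"
    using \<open>k < pi / R\<close> \<open>0 < R\<close> by (simp add: less_divide_eq)
  have "k^2 < (pi / R)^2"
    using assms by (intro power_strict_mono) auto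
  also have "\<dots> \<le> m / 2"
    using large \<open>0 < R\<close> unfolding m_def by (simp add: power_divide field_simps)
  finally have "k^2 < m / 2" .
  then have "(m / 2) * (pi - k * R) \<le> (m - k^2) * (pi - k * R)"
    using \<open>k * R < pi\<close> by (intro mult_right_mono) auto
  also have "\<dots> \<le> \<sigma> * k"
    using trig_char_root_gap[of \<sigma> k R A] \<open>k * R < pi\<close> \<open>k^2 < m / 2\<close> \<open>0 < m\<close> assms
    unfolding m_def by simp
  also have "\<dots> < \<sigma> * (pi / R)"
    using assms by (intro mult_strict_left_mono) auto
  finally show ?thesis
    unfolding m_def[symmetric] using \<open>0 < m\<close> \<open>0 < R\<close> by (simp add: field_simps power2_eq_square)
qed

lemma eigenvalue_ge_of_large_R:
  assumes "0 < A" and "A < \<sigma>" and "0 < R" and large: "2 * pi^2 \<le> A * (\<sigma> - A) * R^2"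
    and ev: "is_eigenvalue A R \<sigma> lam"
  shows "A^2 + pi^2 / R^2 - (4 * \<sigma> * pi^2 / (A * (\<sigma> - A))) / R^3 \<le> lam"
proof -
  define m where "m = A * (\<sigma> - A)"
  have "0 < m"
    unfolding m_def using assms by simp
  have "A^2 < lam"
    using eigenvalue_gt_A2[OF \<open>0 < A\<close> \<open>0 < R\<close> _ ev] \<open>A < \<sigma>\<close> by simp
  then obtain k where "0 < k" and lam: "lam = A^2 + k^2" and root: "trig_char A \<sigma> R k = 0"
    using is_eigenvalue_above_A2E[OF ev] \<open>0 < R\<close> by auto
  have "0 \<le> (4 * \<sigma> * pi^2 / m) / R^3"
    using \<open>0 < m\<close> \<open>0 < R\<close> assms by simp
  moreover have "pi^2 / R^2 - (4 * \<sigma> * pi^2 / m) / R^3 \<le> k^2" if "k < pi / R"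
  proof -
    have "pi / R - 2 * \<sigma> * pi / (m * R^2) < k"
      using trig_char_root_near_pi_div_R[OF assms(1-4) \<open>0 < k\<close> that root] unfolding m_def .
    then have "(pi / R)^2 - 2 * (pi / R) * (2 * \<sigma> * pi / (m * R^2)) \<le> k^2"
      by (rule power2_ge_of_gt_diff[OF \<open>0 < k\<close>]) (use \<open>0 < m\<close> \<open>0 < R\<close> assms in simp_all)
    moreover have "2 * (pi / R) * (2 * \<sigma> * pi / (m * R^2)) = (4 * \<sigma> * pi^2 / m) / R^3"
      using \<open>0 < m\<close> \<open>0 < R\<close> by (simp add: field_simps power2_eq_square power3_eq_cube)
    ultimately show ?thesis
      by (simp add: power_divide)
  qed
  moreover have "(pi / R)^2 \<le> k^2" if "pi / R \<le> k"
    using that \<open>0 < R\<close> by (intro power_mono) auto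
  ultimately have "pi^2 / R^2 - (4 * \<sigma> * pi^2 / m) / R^3 \<le> k^2"
    by (cases "pi / R \<le> k") (auto simp: power_divide)
  then show ?thesis
    unfolding lam m_def by simp
qed

theorem lemma6p1:
  fixes A \<sigma> :: real
  assumes "A > 0"
  shows "(\<forall>R>0. (0 \<le> \<sigma> \<and> \<sigma> \<le> A \<longrightarrow> first_eigenvalue A R \<sigma> \<ge> 2 * \<sigma> * A - \<sigma>^2) \<and>
                 (\<sigma> \<ge> A \<longrightarrow> first_eigenvalue A R \<sigma> \<ge> A^2))
       \<and> (\<sigma> < 0 \<longrightarrow> (\<forall>R>0. first_eigenvalue A R \<sigma> \<le> 2 * A * \<sigma> - \<sigma>^2))
       \<and> (\<sigma> > A \<longrightarrow> (\<exists>R0>0. \<exists>c0>0. \<forall>R\<ge>R0.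
              first_eigenvalue A R \<sigma> \<ge> A^2 + pi^2 / R^2 - c0 / R^3))"
proof (intro conjI allI impI)
  fix R :: real assume "R > 0"
  show "first_eigenvalue A R \<sigma> \<ge> 2 * \<sigma> * A - \<sigma>^2" if "0 \<le> \<sigma> \<and> \<sigma> \<le> A"
    using eigenvalue_ge_of_nonneg_sigma[OF assms \<open>R > 0\<close>] that
    by (intro first_eigenvalue_ge[OF \<open>R > 0\<close>]) auto
  show "first_eigenvalue A R \<sigma> \<ge> A^2" if "\<sigma> \<ge> A"
    using eigenvalue_gt_A2[OF assms \<open>R > 0\<close> that]
    by (intro first_eigenvalue_ge[OF \<open>R > 0\<close>]) (simp add: less_imp_le)
next
  fix R :: real assume "\<sigma> < 0" and "R > 0"
  obtain lam where "is_eigenvalue A R \<sigma> lam" and "lam \<le> 2 * A * \<sigma> - \<sigma>^2"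
    using eigenvalue_le_of_neg_sigma \<open>\<sigma> < 0\<close> assms \<open>R > 0\<close> by blast
  then show "first_eigenvalue A R \<sigma> \<le> 2 * A * \<sigma> - \<sigma>^2"
    unfolding first_eigenvalue_def
    using eigenvalues_bdd_below_of_nonpos_sigma \<open>\<sigma> < 0\<close> assms \<open>R > 0\<close>
    by (intro cInf_lower2) auto
next
  assume "\<sigma> > A"
  define m where "m = A * (\<sigma> - A)"
  have "0 < m"
    unfolding m_def using assms \<open>\<sigma> > A\<close> by simp
  define R0 where "R0 = sqrt (2 * pi^2 / m)"
  have "0 < R0" and R0_sq: "R0^2 = 2 * pi^2 / m"
    unfolding R0_def using \<open>0 < m\<close> by simp_all
  have "first_eigenvalue A R \<sigma> \<ge> A^2 + pi^2 / R^2 - (4 * \<sigma> * pi^2 / m) / R^3" if "R \<ge> R0" for R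
  proof -
    have "R0^2 \<le> R^2"
      using that \<open>0 < R0\<close> by (intro power_mono) auto
    then have "2 * pi^2 \<le> m * R^2"
      using R0_sq \<open>0 < m\<close> by (simp add: divide_le_eq mult.commute)
    moreover have "0 < R"
      using that \<open>0 < R0\<close> by simp
    ultimately show ?thesis
      using eigenvalue_ge_of_large_R[OF assms \<open>\<sigma> > A\<close>] unfolding m_def
      by (intro first_eigenvalue_ge) auto
  qed
  moreover have "0 < 4 * \<sigma> * pi^2 / m"
    using \<open>0 < m\<close> assms \<open>\<sigma> > A\<close> by simp
  ultimately show "\<exists>R0>0. \<exists>c0>0. \<forall>R\<ge>R0. first_eigenvalue A R \<sigma> \<ge> A^2 + pi^2 / R^2 - c0 / R^3"
    using \<open>0 < R0\<close> by blast
qed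

end
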